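(* For any traversal sequence $\tau$, distance metric $d$, and sequence of tasks $w^1,\ldots,w^n$, let $C^{A2}=w^{A2}+d^{A2}$ be the total cost (processing cost plus transition cost) of the "follow the traversal" algorithm, and $C^T=w^T+d^T$ the total cost (processing cost plus transition cost) of the fractional traversal algorithm on that sequence of tasks. Then $C^{A2}\leq 2\cdot C^T$.
   Context: Setting: a metrical task system with state set $S=\{1,\ldots,m\}$ and a symmetric nonnegative distance $d$ on $S$ with $d_{ss}=0$ satisfying the triangle inequality. A task is a vector $w=(w_1,\ldots,w_m)$ of nonnegative reals; $w_s$ is the cost of processing the task in state $s$. A traversal sequence $\tau=\tau_1,\tau_2,\ldots$ is an infinite sequence of states (states may repeat). The traversal distance between indices $\ell,\ell'$ is $\delta_{\ell,\ell'}=\delta_{\ell',\ell}=\sum_{j=\min(\ell,\ell')}^{\max(\ell,\ell')-1} d_{\tau_j,\tau_{j+1}}$. Fractional traversal algorithm (Borodin–Linial–Saks): it keeps a current index $j$ in $\tau$ (starting at $t_0=1$) and the work $\rho_j$ expended at position $j$ since arriving there. On task $w^i$ it processes fractions of the task in state $\tau_j$; whenever the work done at position $j$ reaches $d_{\tau_j,\tau_{j+1}}$ it moves to position $j+1$ (paying $d_{\tau_j,\tau_{j+1}}$) and resets $\rho$ to $0$, continuing until the whole task is done. Let $t_i$ be its index after task $i$, and $\lambda^i_j$ the fraction of task $i$ processed at position $j$ ($\sum_j\lambda^i_j=1$). Its cost on task $i$ is $\delta_{t_{i-1},t_i}+\sum_{j=t_{i-1}}^{t_i}\lambda^i_j w^i_{\tau_j}$.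 "Follow the traversal" algorithm: it keeps an index $\ell_{i-1}$ in $\tau$ ($\ell_0=1$) and simulates the fractional traversal algorithm (index $t_{i-1}$). On task $w^i$, let $j_{\min}=\min(\ell_{i-1},t_{i-1})$, $j_{\max}=\max(\ell_{i-1},t_{i-1})$, and define $\tilde c(j)=w^i_{\tau_j}$ if $j_{\min}\le j\le j_{\max}$, $\tilde c(j)=w^i_{\tau_j}+\delta_{j_{\max},j}$ if $j>j_{\max}$, and $\tilde c(j)=\infty$ otherwise. It sets $\ell_i\in\arg\min_{j\ge j_{\min}}\tilde c(j)$ (ties broken arbitrarily), moves from state $\tau_{\ell_{i-1}}$ to state $\tau_{\ell_i}$ (paying $d_{\tau_{\ell_{i-1}},\tau_{\ell_i}}$) and processes the whole task there (paying $w^i_{\tau_{\ell_i}}$). *)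

theory Defs
  imports Complex_Main
begin

text \<open>States form a finite type 'a (so S = UNIV with m = CARD('a)).
  A traversal sequence is tau :: nat => 'a, used at indices 1,2,3,...
  Tasks are w :: nat => 'a => real, task i (1 <= i <= n) being w i.\<close>

definition metric_dist :: "('a \<Rightarrow> 'a \<Rightarrow> real) \<Rightarrow> bool" where
  "metric_dist d \<longleftrightarrow>
     (\<forall>s. d s s = 0) \<and> (\<forall>s s'. 0 \<le> d s s' \<and> d s s' = d s' s) \<and>
     (\<forall>s s' s''. d s s'' \<le> d s s' + d s' s'')"

definition trav_dist :: "(nat \<Rightarrow> 'a) \<Rightarrow> ('a \<Rightarrow> 'a \<Rightarrow> real) \<Rightarrow> nat \<Rightarrow> nat \<Rightarrow> real" where
  "trav_dist tau d l l' = (\<Sum>j\<in>{min l l'..<max l l'}. d (tau j) (tau (Suc j)))"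

text \<open>Runs of the fractional traversal algorithm on tasks 1..n:
  t i is the index after task i, lam i j the fraction of task i processed at position j.
  The work done at a position that is left during task i equals exactly the distance to the
  next position; the work done at the position where the algorithm rests after a task is
  strictly below that distance (the algorithm moves as soon as the work reaches it).\<close>
definition frac_traversal_run ::
  "(nat \<Rightarrow> 'a) \<Rightarrow> ('a \<Rightarrow> 'a \<Rightarrow> real) \<Rightarrow> (nat \<Rightarrow> 'a \<Rightarrow> real) \<Rightarrow> nat
    \<Rightarrow> (nat \<Rightarrow> nat) \<Rightarrow> (nat \<Rightarrow> nat \<Rightarrow> real) \<Rightarrow> bool" where
  "frac_traversal_run tau d w n t lam \<longleftrightarrow>
     t 0 = 1 \<and>
     (\<forall>i\<in>{1..n}.
        t (i - 1) \<le> t i \<and>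
        (\<forall>j. 0 \<le> lam i j) \<and>
        (\<forall>j. j < t (i - 1) \<or> t i < j \<longrightarrow> lam i j = 0) \<and>
        (\<Sum>j\<in>{t (i - 1)..t i}. lam i j) = 1 \<and>
        (\<forall>j. t (i - 1) \<le> j \<and> j < t i \<longrightarrow>
             (\<Sum>k\<in>{1..i}. lam k j * w k (tau j)) = d (tau j) (tau (Suc j))) \<and>
        (\<Sum>k\<in>{1..i}. lam k (t i) * w k (tau (t i))) < d (tau (t i)) (tau (Suc (t i))))"

definition frac_proc_cost ::
  "(nat \<Rightarrow> 'a) \<Rightarrow> (nat \<Rightarrow> 'a \<Rightarrow> real) \<Rightarrow> nat \<Rightarrow> (nat \<Rightarrow> nat) \<Rightarrow> (nat \<Rightarrow> nat \<Rightarrow> real) \<Rightarrow> real" where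
  "frac_proc_cost tau w n t lam =
     (\<Sum>i\<in>{1..n}. \<Sum>j\<in>{t (i - 1)..t i}. lam i j * w i (tau j))"

definition frac_move_cost ::
  "(nat \<Rightarrow> 'a) \<Rightarrow> ('a \<Rightarrow> 'a \<Rightarrow> real) \<Rightarrow> nat \<Rightarrow> (nat \<Rightarrow> nat) \<Rightarrow> real" where
  "frac_move_cost tau d n t = (\<Sum>i\<in>{1..n}. trav_dist tau d (t (i - 1)) (t i))"

text \<open>The modified cost c~(j) of "follow the traversal" for task i, given l_{i-1} = lp and
  t_{i-1} = tp; only used for j >= min lp tp (it is infinite otherwise).\<close>
definition ftt_ctilde ::
  "(nat \<Rightarrow> 'a) \<Rightarrow> ('a \<Rightarrow> 'a \<Rightarrow> real) \<Rightarrow> (nat \<Rightarrow> 'a \<Rightarrow> real) \<Rightarrow> nat \<Rightarrow> nat \<Rightarrow> nat \<Rightarrow> nat \<Rightarrow> real" where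
  "ftt_ctilde tau d w i lp tp j =
     (if j \<le> max lp tp then w i (tau j) else w i (tau j) + trav_dist tau d (max lp tp) j)"

text \<open>Runs of "follow the traversal" (ties broken arbitrarily), given the simulated
  fractional traversal indices t.\<close>
definition ftt_run ::
  "(nat \<Rightarrow> 'a) \<Rightarrow> ('a \<Rightarrow> 'a \<Rightarrow> real) \<Rightarrow> (nat \<Rightarrow> 'a \<Rightarrow> real) \<Rightarrow> nat
    \<Rightarrow> (nat \<Rightarrow> nat) \<Rightarrow> (nat \<Rightarrow> nat) \<Rightarrow> bool" where
  "ftt_run tau d w n t l \<longleftrightarrow>
     l 0 = 1 \<and>
     (\<forall>i\<in>{1..n}.
        min (l (i - 1)) (t (i - 1)) \<le> l i \<and>
        (\<forall>j. min (l (i - 1)) (t (i - 1)) \<le> j \<longrightarrow>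
             ftt_ctilde tau d w i (l (i - 1)) (t (i - 1)) (l i)
               \<le> ftt_ctilde tau d w i (l (i - 1)) (t (i - 1)) j))"

definition ftt_proc_cost :: "(nat \<Rightarrow> 'a) \<Rightarrow> (nat \<Rightarrow> 'a \<Rightarrow> real) \<Rightarrow> nat \<Rightarrow> (nat \<Rightarrow> nat) \<Rightarrow> real" where
  "ftt_proc_cost tau w n l = (\<Sum>i\<in>{1..n}. w i (tau (l i)))"

definition ftt_move_cost :: "(nat \<Rightarrow> 'a) \<Rightarrow> ('a \<Rightarrow> 'a \<Rightarrow> real) \<Rightarrow> nat \<Rightarrow> (nat \<Rightarrow> nat) \<Rightarrow> real" where
  "ftt_move_cost tau d n l = (\<Sum>i\<in>{1..n}. d (tau (l (i - 1))) (tau (l i)))"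

end

theory Submission
  imports Defs
begin

text \<open>Place the traversal on a line: index j sits at the distance travelled from the start,
  trav_pos j. Traversal distances become differences of positions, and d between two visited
  states is at most their positional difference. With the potential
  |trav_pos l_i - trav_pos t_i| the cost of "follow the traversal" on task i plus the
  change of potential is at most twice the cost of the fractional traversal algorithm on task i:
  since l_i minimises the modified cost c~, its value is at most the average of c~,
  weighted by the fractions lam i j, over the positions visited during task i, and the rest
  is arithmetic on the line.
  Summing telescopes the potential, which vanishes initially and is nonnegative at the end.\<close>

definition trav_pos :: "(nat \<Rightarrow> 'a) \<Rightarrow> ('a \<Rightarrow> 'a \<Rightarrow> real) \<Rightarrow> nat \<Rightarrow> real" where
  "trav_pos tau d j = (\<Sum>k<j. d (tau k) (tau (Suc k)))"

lemma metric_dist_nonneg: "metric_dist d \<Longrightarrow> \<forall>s s'. 0 \<le> d s s'"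
  unfolding metric_dist_def by blast

lemma trav_pos_split:
  "a \<le> b \<Longrightarrow> trav_pos tau d b = trav_pos tau d a + (\<Sum>k\<in>{a..<b}. d (tau k) (tau (Suc k)))"
  unfolding trav_pos_def by (induction b) (auto simp: le_Suc_eq)

lemma trav_pos_mono:
  fixes tau :: "nat \<Rightarrow> 'a" and d :: "'a \<Rightarrow> 'a \<Rightarrow> real"
  assumes "\<forall>s s'. 0 \<le> d s s'" and "a \<le> b"
  shows "trav_pos tau d a \<le> trav_pos tau d b"
  using trav_pos_split[OF assms(2), of tau d] assms(1) by (simp add: sum_nonneg)

lemma trav_dist_eq_abs_trav_pos:
  fixes tau :: "nat \<Rightarrow> 'a" and d :: "'a \<Rightarrow> 'a \<Rightarrow> real"
  assumes "\<forall>s s'. 0 \<le> d s s'"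
  shows "trav_dist tau d p q = \<bar>trav_pos tau d p - trav_pos tau d q\<bar>"
proof -
  have "trav_pos tau d (max p q) = trav_pos tau d (min p q) + trav_dist tau d p q"
    unfolding trav_dist_def by (rule trav_pos_split) simp
  moreover have "trav_pos tau d (min p q) \<le> trav_pos tau d (max p q)"
    by (rule trav_pos_mono[OF assms]) simp
  ultimately show ?thesis by (cases "p \<le> q") (auto simp: max_def min_def)
qed

lemma dist_le_trav_dist:
  fixes tau :: "nat \<Rightarrow> 'a" and d :: "'a \<Rightarrow> 'a \<Rightarrow> real"
  assumes "metric_dist d"
  shows "d (tau a) (tau b) \<le> trav_dist tau d a b"
proof -
  have path: "d (tau a) (tau b) \<le> trav_dist tau d a b" if "a \<le> b" for a b
    using that
  proof (induction b)
    case 0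
    then show ?case using assms by (simp add: metric_dist_def trav_dist_def)
  next
    case (Suc b)
    show ?case
    proof (cases "a = Suc b")
      case True
      then show ?thesis using assms by (simp add: metric_dist_def trav_dist_def)
    next
      case False
      with Suc have "a \<le> b" "d (tau a) (tau b) \<le> trav_dist tau d a b" by simp_all
      moreover have "d (tau a) (tau (Suc b)) \<le> d (tau a) (tau b) + d (tau b) (tau (Suc b))"
        using assms unfolding metric_dist_def by blast
      ultimately show ?thesis by (simp add: trav_dist_def max_def min_def)
    qed
  qed
  have "d (tau a) (tau b) = d (tau b) (tau a)"
    using assms unfolding metric_dist_def by blast
  with path[of a b] path[of b a] show ?thesis
    by (cases "a \<le> b") (auto simp: trav_dist_def min_def max_def)
qed

lemma ftt_ctilde_eq:
  fixes tau :: "nat \<Rightarrow> 'a" and d :: "'a \<Rightarrow> 'a \<Rightarrow> real"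
  assumes "\<forall>s s'. 0 \<le> d s s'"
  shows "ftt_ctilde tau d w i lp tp j
           = w i (tau j) + max (trav_pos tau d j - trav_pos tau d (max lp tp)) 0"
proof (cases "j \<le> max lp tp")
  case True
  then show ?thesis using trav_pos_mono[OF assms True] by (simp add: ftt_ctilde_def)
next
  case False
  then have "trav_pos tau d (max lp tp) \<le> trav_pos tau d j"
    by (intro trav_pos_mono[OF assms]) auto
  with False show ?thesis by (simp add: ftt_ctilde_def trav_dist_eq_abs_trav_pos[OF assms])
qed

lemma minimum_le_convex_combination:
  fixes c lam :: "'b \<Rightarrow> real"
  assumes "\<And>j. j \<in> J \<Longrightarrow> c x \<le> c j" "\<And>j. j \<in> J \<Longrightarrow> 0 \<le> lam j" "(\<Sum>j\<in>J. lam j) = 1"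
  shows "c x \<le> (\<Sum>j\<in>J. lam j * c j)"
proof -
  have "c x = (\<Sum>j\<in>J. lam j * c x)"
    using assms(3) by (simp add: sum_distrib_right[symmetric])
  also have "\<dots> \<le> (\<Sum>j\<in>J. lam j * c j)"
    using assms(1,2) by (intro sum_mono mult_left_mono) auto
  finally show ?thesis .
qed

lemma sum_le_sum_by_potential:
  fixes A B \<Phi> :: "nat \<Rightarrow> real"
  assumes "\<Phi> 0 = 0" "0 \<le> \<Phi> n"
    and "\<And>i. i \<in> {1..n} \<Longrightarrow> A i + \<Phi> i - \<Phi> (i - 1) \<le> B i"
  shows "(\<Sum>i\<in>{1..n}. A i) \<le> (\<Sum>i\<in>{1..n}. B i)"
proof -
  have "k \<le> n \<Longrightarrow> (\<Sum>i\<in>{1..k}. A i) + \<Phi> k \<le> (\<Sum>i\<in>{1..k}. B i)" for k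
  proof (induction k)
    case 0
    then show ?case using assms(1) by simp
  next
    case (Suc k)
    then show ?case using assms(3)[of "Suc k"] by simp
  qed
  with assms(2) show ?thesis by force
qed

lemma amortized_bound_on_line:
  fixes l0 t0 l1 t1 c W :: real
  assumes "t0 \<le> t1" "min l0 t0 \<le> l1" "0 \<le> c" "0 \<le> W"
    and "c + max (l1 - max l0 t0) 0 \<le> W + max (t1 - max l0 t0) 0"
  shows "c + \<bar>l0 - l1\<bar> + \<bar>l1 - t1\<bar> - \<bar>l0 - t0\<bar> \<le> 2 * (W + (t1 - t0))"
  using assms by (simp add: abs_if min_def max_def split: if_splits)

lemma ftt_choice_bound:
  assumes metric: "metric_dist d"
    and frac: "frac_traversal_run tau d w n t lam"
    and ftt: "ftt_run tau d w n t l"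
    and i: "i \<in> {1..n}"
  defines "M \<equiv> trav_pos tau d (max (l (i - 1)) (t (i - 1)))"
  shows "w i (tau (l i)) + max (trav_pos tau d (l i) - M) 0
           \<le> (\<Sum>j\<in>{t (i - 1)..t i}. lam i j * w i (tau j)) + max (trav_pos tau d (t i) - M) 0"
proof -
  have d_nonneg: "\<forall>s s'. 0 \<le> d s s'" using metric by (rule metric_dist_nonneg)
  let ?c = "ftt_ctilde tau d w i (l (i - 1)) (t (i - 1))" and ?J = "{t (i - 1)..t i}"
  have lam_nonneg: "\<And>j. 0 \<le> lam i j" and lam_sum: "(\<Sum>j\<in>?J. lam i j) = 1"
    using frac i unfolding frac_traversal_run_def by blast+
  have l_min: "\<And>j. min (l (i - 1)) (t (i - 1)) \<le> j \<Longrightarrow> ?c (l i) \<le> ?c j"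
    using ftt i unfolding ftt_run_def by blast
  have "?c (l i) \<le> (\<Sum>j\<in>?J. lam i j * ?c j)"
    using l_min lam_nonneg lam_sum by (intro minimum_le_convex_combination) auto
  also have "\<dots> \<le> (\<Sum>j\<in>?J. lam i j * w i (tau j) + lam i j * max (trav_pos tau d (t i) - M) 0)"
  proof (intro sum_mono)
    fix j assume "j \<in> ?J"
    then have "trav_pos tau d j \<le> trav_pos tau d (t i)" by (intro trav_pos_mono[OF d_nonneg]) simp
    then show "lam i j * ?c j \<le> lam i j * w i (tau j) + lam i j * max (trav_pos tau d (t i) - M) 0"
      using lam_nonneg[of j]
      by (simp add: ftt_ctilde_eq[OF d_nonneg] M_def distrib_left mult_left_mono)
  qed
  also have "\<dots> = (\<Sum>j\<in>?J. lam i j * w i (tau j)) + max (trav_pos tau d (t i) - M) 0"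
    using lam_sum by (simp add: sum.distrib sum_distrib_right[symmetric])
  finally show ?thesis by (simp add: ftt_ctilde_eq[OF d_nonneg] M_def)
qed

lemma ftt_amortized_step:
  assumes metric: "metric_dist d"
    and w_nonneg: "\<And>s. 0 \<le> w i s"
    and frac: "frac_traversal_run tau d w n t lam"
    and ftt: "ftt_run tau d w n t l"
    and i: "i \<in> {1..n}"
  defines "\<Phi> \<equiv> \<lambda>k. \<bar>trav_pos tau d (l k) - trav_pos tau d (t k)\<bar>"
  shows "w i (tau (l i)) + d (tau (l (i - 1))) (tau (l i)) + \<Phi> i - \<Phi> (i - 1)
           \<le> 2 * ((\<Sum>j\<in>{t (i - 1)..t i}. lam i j * w i (tau j)) + trav_dist tau d (t (i - 1)) (t i))"
proof -
  have d_nonneg: "\<forall>s s'. 0 \<le> d s s'" using metric by (rule metric_dist_nonneg)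
  let ?X = "trav_pos tau d" and ?W = "\<Sum>j\<in>{t (i - 1)..t i}. lam i j * w i (tau j)"
  have t_mono: "t (i - 1) \<le> t i" and lam_nonneg: "\<And>j. 0 \<le> lam i j"
    using frac i unfolding frac_traversal_run_def by blast+
  have X_min: "?X (min p q) = min (?X p) (?X q)" and X_max: "?X (max p q) = max (?X p) (?X q)"
    for p q
    using trav_pos_mono[OF d_nonneg, where tau = tau and a = p and b = q]
      trav_pos_mono[OF d_nonneg, where tau = tau and a = q and b = p]
    by (auto simp: min_def max_def)
  have "min (l (i - 1)) (t (i - 1)) \<le> l i" using ftt i unfolding ftt_run_def by blast
  then have "min (?X (l (i - 1))) (?X (t (i - 1))) \<le> ?X (l i)"
    unfolding X_min[symmetric] by (rule trav_pos_mono[OF d_nonneg])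
  moreover have "?X (t (i - 1)) \<le> ?X (t i)" by (rule trav_pos_mono[OF d_nonneg t_mono])
  moreover have "w i (tau (l i)) + max (?X (l i) - max (?X (l (i - 1))) (?X (t (i - 1)))) 0
                  \<le> ?W + max (?X (t i) - max (?X (l (i - 1))) (?X (t (i - 1)))) 0"
    using ftt_choice_bound[OF metric frac ftt i] by (simp add: X_max)
  moreover have "0 \<le> ?W" using lam_nonneg w_nonneg by (simp add: sum_nonneg)
  ultimately have "w i (tau (l i)) + \<bar>?X (l (i - 1)) - ?X (l i)\<bar> + \<Phi> i - \<Phi> (i - 1)
                     \<le> 2 * (?W + (?X (t i) - ?X (t (i - 1))))"
    unfolding \<Phi>_def by (intro amortized_bound_on_line w_nonneg)
  moreover have "d (tau (l (i - 1))) (tau (l i)) \<le> \<bar>?X (l (i - 1)) - ?X (l i)\<bar>"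
    using dist_le_trav_dist[OF metric] by (simp add: trav_dist_eq_abs_trav_pos[OF d_nonneg])
  moreover have "trav_dist tau d (t (i - 1)) (t i) = ?X (t i) - ?X (t (i - 1))"
    using trav_pos_mono[OF d_nonneg t_mono] by (simp add: trav_dist_eq_abs_trav_pos[OF d_nonneg])
  ultimately show ?thesis by simp
qed

theorem theorem3:
  fixes tau :: "nat \<Rightarrow> 'a::finite"
    and d :: "'a \<Rightarrow> 'a \<Rightarrow> real"
    and w :: "nat \<Rightarrow> 'a \<Rightarrow> real"
    and n :: nat
    and t :: "nat \<Rightarrow> nat" and lam :: "nat \<Rightarrow> nat \<Rightarrow> real"
    and l :: "nat \<Rightarrow> nat"
  assumes "metric_dist d"
    and "\<forall>i\<in>{1..n}. \<forall>s. 0 \<le> w i s"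
    and "frac_traversal_run tau d w n t lam"
    and "ftt_run tau d w n t l"
  shows "ftt_proc_cost tau w n l + ftt_move_cost tau d n l
           \<le> 2 * (frac_proc_cost tau w n t lam + frac_move_cost tau d n t)"
proof -
  define \<Phi> where "\<Phi> k = \<bar>trav_pos tau d (l k) - trav_pos tau d (t k)\<bar>" for k
  have "l 0 = 1" "t 0 = 1"
    using assms(3,4) unfolding ftt_run_def frac_traversal_run_def by blast+
  then have "\<Phi> 0 = 0" by (simp add: \<Phi>_def)
  then have "(\<Sum>i\<in>{1..n}. w i (tau (l i)) + d (tau (l (i - 1))) (tau (l i)))
      \<le> (\<Sum>i\<in>{1..n}. 2 * ((\<Sum>j\<in>{t (i - 1)..t i}. lam i j * w i (tau j))
                             + trav_dist tau d (t (i - 1)) (t i)))"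
    using ftt_amortized_step[OF assms(1) _ assms(3,4)] assms(2)
    by (intro sum_le_sum_by_potential[where \<Phi> = \<Phi>]) (auto simp: \<Phi>_def)
  then show ?thesis
    unfolding ftt_proc_cost_def ftt_move_cost_def frac_proc_cost_def frac_move_cost_def
    by (simp add: sum.distrib sum_distrib_left)
qed

end
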